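(* Let $r\in[0,\pi/2)$ and suppose $\mathscr A^r$ is invariant for (TVKR). For $i\ne j$ define $c^r_{ij}(t)=[a_{ij}(t)+a_{ji}(t)]\cos r$ if $a_{ij}(t)+a_{ji}(t)>0$ and $c^r_{ij}(t)=a_{ij}(t)+a_{ji}(t)$ otherwise; and $\tilde a^r_{ik}(t)=a_{ik}(t)\cos r$ if $a_{ik}(t)>0$ and $\tilde a^r_{ik}(t)=a_{ik}(t)$ otherwise. Define $$\xi(L(t),r)=-\min_{i\ne j}\Big\{c^r_{ij}(t)+\sum_{k\ne i,j}\min\big(\tilde a^r_{ik}(t),\tilde a^r_{jk}(t)\big)\Big\}.$$ If there exist $T>0$ and $\eta>0$ such that $\frac1T\int_t^{t+T}\xi(L(s),r)\,ds\le-\eta$ for all $t\ge 0$, then the PD trajectories of (TVKR) are exponentially asymptotically stable within $\mathscr A^r$.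
   Context: Consider $m\ge 2$ phase oscillators $\theta=(\theta_1,\dots,\theta_m)\in\mathbb R^m$ governed by (TVKR): $\dot\theta_i=\omega_i(t)+\sum_{j=1}^m a_{ij}(t)\sin(\theta_j-\theta_i)$, $i=1,\dots,m$, where $\omega_i$ and $a_{ij}$ are real-valued, piecewise continuous, bounded functions of $t\ge 0$ with $a_{ii}\equiv 0$; the $a_{ij}$ may be negative. $L(t)$ denotes the Laplacian with $l_{ij}=-a_{ij}$ ($i\ne j$), $l_{ii}=\sum_{j\ne i}a_{ij}$. Write $\theta_{ij}=\theta_i-\theta_j$. For $r\in[0,\pi/2)$, $\mathscr A^{r}=\{(\theta_{ij})_{i>j}: |\theta_{ij}|\le r \text{ for all } i>j\}$; $\mathscr A^r$ is invariant for (TVKR) if every solution whose phase differences lie in $\mathscr A^r$ at $t=0$ has phase differences in $\mathscr A^r$ for all $t\ge0$. The PD trajectories are exponentially asymptotically stable within $\mathscr A^r$ if there exist constants $M,T_0,\epsilon>0$ such that for any two solutions $\phi,\theta$ of (TVKR) whose initial phase differences lie in $\mathscr A^r$, $|\phi_{ij}(t)-\theta_{ij}(t)|\le M\max_{k,l}|\phi_{kl}(0)-\theta_{kl}(0)|e^{-\epsilon t}$ for all $t\ge T_0$ and all $i,j$. *)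

theory Defs
  imports "HOL-Analysis.Analysis"
begin

text \<open>Oscillators are indexed by a finite type 'n (m = CARD('n)); time is real, only t \<ge> 0 matters.
  omega :: 'n \<Rightarrow> real \<Rightarrow> real, a :: 'n \<Rightarrow> 'n \<Rightarrow> real \<Rightarrow> real (a i j t = a_ij(t)),
  a phase vector trajectory is theta :: real \<Rightarrow> 'n \<Rightarrow> real.\<close>

definition piecewise_continuous :: "(real \<Rightarrow> real) \<Rightarrow> bool" where
  "piecewise_continuous f \<longleftrightarrow>
     (\<forall>b. finite {t \<in> {0..b}. \<not> continuous (at t within {0..}) f}) \<and>
     (\<forall>t\<ge>0. \<exists>l. (f \<longlongrightarrow> l) (at_right t)) \<and>
     (\<forall>t>0. \<exists>l. (f \<longlongrightarrow> l) (at_left t))"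

definition bounded_fun :: "(real \<Rightarrow> real) \<Rightarrow> bool" where
  "bounded_fun f \<longleftrightarrow> (\<exists>B. \<forall>t\<ge>0. \<bar>f t\<bar> \<le> B)"

text \<open>Solution of (TVKR) on [0,\<infinity>): continuous, and satisfying the ODE at every t \<ge> 0
  outside a countable exceptional set (the coefficients are only piecewise continuous).\<close>
definition tvkr_solution ::
  "('n::finite \<Rightarrow> real \<Rightarrow> real) \<Rightarrow> ('n \<Rightarrow> 'n \<Rightarrow> real \<Rightarrow> real) \<Rightarrow> (real \<Rightarrow> 'n \<Rightarrow> real) \<Rightarrow> bool" where
  "tvkr_solution \<omega> a \<theta> \<longleftrightarrow>
     (\<forall>i. continuous_on {0..} (\<lambda>t. \<theta> t i)) \<and>
     (\<exists>S. countable S \<and>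
        (\<forall>i. \<forall>t\<in>{0..} - S.
           ((\<lambda>s. \<theta> s i) has_real_derivative
              (\<omega> i t + (\<Sum>j\<in>UNIV. a i j t * sin (\<theta> t j - \<theta> t i)))) (at t within {0..})))"

definition in_Ar :: "real \<Rightarrow> ('n \<Rightarrow> real) \<Rightarrow> bool" where
  "in_Ar r x \<longleftrightarrow> (\<forall>i j. i \<noteq> j \<longrightarrow> \<bar>x i - x j\<bar> \<le> r)"

definition Ar_invariant ::
  "real \<Rightarrow> ('n::finite \<Rightarrow> real \<Rightarrow> real) \<Rightarrow> ('n \<Rightarrow> 'n \<Rightarrow> real \<Rightarrow> real) \<Rightarrow> bool" where
  "Ar_invariant r \<omega> a \<longleftrightarrow>
     (\<forall>\<theta>. tvkr_solution \<omega> a \<theta> \<longrightarrow> in_Ar r (\<theta> 0) \<longrightarrow> (\<forall>t\<ge>0. in_Ar r (\<theta> t)))"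

definition PD_exp_stable ::
  "real \<Rightarrow> ('n::finite \<Rightarrow> real \<Rightarrow> real) \<Rightarrow> ('n \<Rightarrow> 'n \<Rightarrow> real \<Rightarrow> real) \<Rightarrow> bool" where
  "PD_exp_stable r \<omega> a \<longleftrightarrow>
     (\<exists>M T0 \<epsilon>. M > 0 \<and> T0 > 0 \<and> \<epsilon> > 0 \<and>
        (\<forall>\<phi> \<theta>. tvkr_solution \<omega> a \<phi> \<longrightarrow> tvkr_solution \<omega> a \<theta> \<longrightarrow>
           in_Ar r (\<phi> 0) \<longrightarrow> in_Ar r (\<theta> 0) \<longrightarrow>
           (\<forall>t\<ge>T0. \<forall>i j.
              \<bar>(\<phi> t i - \<phi> t j) - (\<theta> t i - \<theta> t j)\<bar>
                \<le> M * Max {\<bar>(\<phi> 0 k - \<phi> 0 l) - (\<theta> 0 k - \<theta> 0 l)\<bar> | k l. True}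
                    * exp (- \<epsilon> * t))))"

definition c_r :: "real \<Rightarrow> ('n \<Rightarrow> 'n \<Rightarrow> real \<Rightarrow> real) \<Rightarrow> 'n \<Rightarrow> 'n \<Rightarrow> real \<Rightarrow> real" where
  "c_r r a i j t = (if a i j t + a j i t > 0 then (a i j t + a j i t) * cos r else a i j t + a j i t)"

definition a_tilde :: "real \<Rightarrow> ('n \<Rightarrow> 'n \<Rightarrow> real \<Rightarrow> real) \<Rightarrow> 'n \<Rightarrow> 'n \<Rightarrow> real \<Rightarrow> real" where
  "a_tilde r a i k t = (if a i k t > 0 then a i k t * cos r else a i k t)"

text \<open>xi(L(t), r); L(t) is determined by the a_ij(t).\<close>
definition xi :: "('n::finite \<Rightarrow> 'n \<Rightarrow> real \<Rightarrow> real) \<Rightarrow> real \<Rightarrow> real \<Rightarrow> real" where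
  "xi a r t = - Min {c_r r a i j t + (\<Sum>k\<in>UNIV - {i, j}. min (a_tilde r a i k t) (a_tilde r a j k t))
                     | i j. i \<noteq> j}"

end

theory Submission
  imports Defs
begin

text \<open>Compare two solutions \<phi>, \<theta> through D(t) = max_{i,j} ((\<phi>_i - \<theta>_i) - (\<phi>_j - \<theta>_j)),
  the largest deviation of their phase differences; the frequencies \<omega>_i cancel in this
  comparison, so no property of them is needed. At a pair (p, q) realising the maximum,
  \<phi>_p - \<theta>_p is maximal and \<phi>_q - \<theta>_q minimal. Since all phase differences stay in [-r, r],
  the mean value theorem squeezes every difference of sines between cos r and 1 times the
  difference of its arguments, and sorting the coupling terms by the sign of their weights gives
  the upper right Dini derivative bound D' \<le> \<xi>(L(t), r) D outside a countable set of times.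
  A Gronwall argument for Dini derivatives yields D(t) \<le> D(0) exp (\<integral>_0^t \<xi>), and the averaging
  hypothesis bounds this exponent by -\<eta> t + const.\<close>

definition right_dini_le :: "(real \<Rightarrow> real) \<Rightarrow> real \<Rightarrow> real \<Rightarrow> bool" where
  "right_dini_le u t c \<longleftrightarrow> (\<forall>e>0. eventually (\<lambda>s. u s \<le> u t + (c + e) * (s - t)) (at_right t))"

lemma last_crossing:
  fixes h :: "real \<Rightarrow> real"
  assumes ab: "a \<le> b" and cont: "continuous_on {a..b} h" and y: "h a < y" "y < h b"
  obtains \<tau> where "\<tau> \<in> {a..<b}" "h \<tau> = y" "\<And>s. \<tau> < s \<Longrightarrow> s \<le> b \<Longrightarrow> y < h s"
proof -
  define T where "T = {a..b} \<inter> h -` {..y}"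
  have "closed T" unfolding T_def by (rule continuous_closed_preimage[OF cont]) auto
  moreover have "a \<in> T" using y ab by (auto simp: T_def)
  moreover have bdd: "bdd_above T" unfolding T_def by (auto intro: bdd_aboveI[where M=b])
  ultimately have "Sup T \<in> T" using closed_contains_Sup by blast
  then have \<tau>: "a \<le> Sup T" "Sup T \<le> b" "h (Sup T) \<le> y" by (auto simp: T_def)
  then have "Sup T < b" using y(2) by (metis order.not_eq_order_implies_strict not_le)
  have above: "y < h s" if "Sup T < s" "s \<le> b" for s
  proof (rule ccontr)
    assume "\<not> y < h s"
    then have "s \<in> T" using that \<tau> by (auto simp: T_def)
    then show False using cSup_upper[OF _ bdd] that by force
  qed
  have "h (Sup T) = y"
  proof (rule ccontr)
    assume "h (Sup T) \<noteq> y"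
    then have "0 < y - h (Sup T)" using \<tau> by auto
    moreover have "continuous (at (Sup T) within {a..b}) h"
      using cont \<tau> by (simp add: continuous_on_eq_continuous_within)
    ultimately obtain d where d: "d > 0"
      "\<And>s. s \<in> {a..b} \<Longrightarrow> dist s (Sup T) < d \<Longrightarrow> dist (h s) (h (Sup T)) < y - h (Sup T)"
      unfolding continuous_within_eps_delta by metis
    define s where "s = min (Sup T + d/2) b"
    have s: "Sup T < s" "s \<le> b" "s \<in> {a..b}" "dist s (Sup T) < d"
      using d \<open>Sup T < b\<close> \<tau> by (auto simp: s_def dist_real_def)
    then show False using d(2)[OF s(3,4)] above[OF s(1,2)] by (auto simp: dist_real_def)
  qed
  then show ?thesis using that \<tau> \<open>Sup T < b\<close> above by auto
qed

lemma right_dini_nonpos_imp_le: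
  fixes g :: "real \<Rightarrow> real"
  assumes ab: "a \<le> b" and cont: "continuous_on {a..b} g" and C: "countable C"
    and dini: "\<And>t. t \<in> {a..<b} \<Longrightarrow> t \<notin> C \<Longrightarrow> right_dini_le g t 0"
  shows "g b \<le> g a"
proof (rule ccontr)
  assume "\<not> g b \<le> g a"
  then have "a < b" using ab by (cases "a = b") auto
  define e where "e = (g b - g a) / (2 * (b - a))"
  have e: "e > 0" using \<open>\<not> g b \<le> g a\<close> \<open>a < b\<close> by (simp add: e_def)
  define h where "h t = g t - e * (t - a)" for t
  have "e * (b - a) = (g b - g a) / 2" using \<open>a < b\<close> by (simp add: e_def field_simps)
  then have "h a < h b" using \<open>\<not> g b \<le> g a\<close> by (simp add: h_def)
  \<comment> \<open>Only countably many levels are hit on C, so some level crossing happens outside C.\<close>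
  then have "\<not> {h a<..<h b} \<subseteq> h ` C"
    using C uncountable_open_interval countable_subset by (metis countable_image)
  then obtain y where y: "h a < y" "y < h b" "y \<notin> h ` C" by (auto simp: subset_eq)
  have "continuous_on {a..b} h" unfolding h_def by (intro continuous_intros cont)
  then obtain \<tau> where \<tau>: "\<tau> \<in> {a..<b}" "h \<tau> = y" and above: "\<And>s. \<tau> < s \<Longrightarrow> s \<le> b \<Longrightarrow> y < h s"
    using last_crossing ab y(1,2) by metis
  have "\<tau> \<notin> C" using \<tau>(2) y(3) by auto
  then have "eventually (\<lambda>s. g s \<le> g \<tau> + (0 + e/2) * (s - \<tau>)) (at_right \<tau>)"
    using dini[OF \<tau>(1)] e unfolding right_dini_le_def by (meson half_gt_zero)
  then have "eventually (\<lambda>s. g s \<le> g \<tau> + e * (s - \<tau>) / 2) (at_right \<tau>)" by simp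
  moreover have "eventually (\<lambda>s. s < b) (at_right \<tau>)"
    using \<tau>(1) by (intro order_tendstoD(2)[OF tendsto_ident_at]) auto
  ultimately have "eventually (\<lambda>s. False) (at_right \<tau>)"
    using eventually_at_right_less[of \<tau>]
  proof eventually_elim
    case (elim s)
    have "0 < e * (s - \<tau>)" using e elim by simp
    moreover have "h s - h \<tau> = g s - g \<tau> - e * (s - \<tau>)" by (simp add: h_def algebra_simps)
    ultimately have "h s < h \<tau>" using elim(1) by linarith
    then show False using above[of s] elim \<tau>(2) by auto
  qed
  then show False by simp
qed

lemma has_real_derivative_imp_right_dini_le:
  assumes "(u has_real_derivative u') (at_right t)" "u' \<le> c"
  shows "right_dini_le u t c"
  unfolding right_dini_le_def
proof (intro allI impI)
  fix e :: real assume "e > 0"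
  have "((\<lambda>s. (u s - u t) / (s - t)) \<longlongrightarrow> u') (at_right t)"
    using assms(1) by (simp add: has_field_derivative_iff)
  then have "eventually (\<lambda>s. (u s - u t) / (s - t) < u' + e) (at_right t)"
    using \<open>e > 0\<close> by (intro order_tendstoD(2)) auto
  then show "eventually (\<lambda>s. u s \<le> u t + (c + e) * (s - t)) (at_right t)"
    using eventually_at_right_less[of t]
  proof eventually_elim
    case (elim s)
    then have "u s - u t < (u' + e) * (s - t)" by (simp add: divide_less_eq)
    also have "\<dots> \<le> (c + e) * (s - t)" using elim assms(2) by (intro mult_right_mono) auto
    finally show ?case by simp
  qed
qed

lemma right_dini_le_Max:
  fixes u :: "'k \<Rightarrow> real \<Rightarrow> real"
  assumes K: "finite K" "K \<noteq> {}"
    and lim: "\<And>k. k \<in> K \<Longrightarrow> (u k \<longlongrightarrow> u k t) (at_right t)"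
    and active: "\<And>k. k \<in> K \<Longrightarrow> u k t = Max ((\<lambda>k. u k t) ` K) \<Longrightarrow> right_dini_le (u k) t c"
  shows "right_dini_le (\<lambda>s. Max ((\<lambda>k. u k s) ` K)) t c"
  unfolding right_dini_le_def
proof (intro allI impI)
  fix e :: real assume e: "e > 0"
  define M where "M = Max ((\<lambda>k. u k t) ` K)"
  have each: "eventually (\<lambda>s. u k s \<le> M + (c + e) * (s - t)) (at_right t)" if k: "k \<in> K" for k
  proof (cases "u k t = M")
    case True
    then show ?thesis using active[OF k] e unfolding right_dini_le_def M_def by auto
  next
    case False
    moreover have "u k t \<le> M" using K k by (auto simp: M_def)
    ultimately have gap: "M - u k t > 0" by simp
    have "eventually (\<lambda>s. u k s < u k t + (M - u k t)/2) (at_right t)"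
      using lim[OF k] gap by (intro order_tendstoD(2)) auto
    moreover have "((\<lambda>s. (c + e) * (s - t)) \<longlongrightarrow> (c + e) * (t - t)) (at_right t)"
      by (intro tendsto_intros)
    then have "eventually (\<lambda>s. - ((M - u k t)/2) < (c + e) * (s - t)) (at_right t)"
      using gap by (intro order_tendstoD(1)) auto
    ultimately show ?thesis
    proof eventually_elim
      case (elim s)
      then show ?case by argo
    qed
  qed
  have "eventually (\<lambda>s. \<forall>k\<in>K. u k s \<le> M + (c + e) * (s - t)) (at_right t)"
    by (intro eventually_ball_finite[OF K(1)] ballI each)
  then show "eventually (\<lambda>s. Max ((\<lambda>k. u k s) ` K) \<le> Max ((\<lambda>k. u k t) ` K) + (c + e) * (s - t))
      (at_right t)"
    by eventually_elim (use K in \<open>auto simp: M_def\<close>)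
qed

lemma right_dini_le_mult:
  assumes D: "right_dini_le D t c" and f: "(f has_real_derivative f') (at_right t)"
    and f_pos: "\<And>s. f s > 0"
  shows "right_dini_le (\<lambda>s. D s * f s) t (c * f t + D t * f')"
  unfolding right_dini_le_def
proof (intro allI impI)
  fix e :: real assume e: "e > 0"
  define e' where "e' = e / (3 * f t)"
  have e': "e' > 0" "e' * f t = e / 3" using e f_pos[of t] by (auto simp: e'_def)
  have "(f \<longlongrightarrow> f t) (at_right t)"
    using DERIV_continuous[OF f] by (simp add: continuous_within)
  then have "((\<lambda>s. (c + e') * f s) \<longlongrightarrow> (c + e') * f t) (at_right t)"
    by (intro tendsto_intros)
  then have ev1: "eventually (\<lambda>s. (c + e') * f s < (c + e') * f t + e/3) (at_right t)"
    using e by (intro order_tendstoD(2)) auto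
  have "((\<lambda>s. (f s - f t) / (s - t)) \<longlongrightarrow> f') (at_right t)"
    using f by (simp add: has_field_derivative_iff)
  then have "((\<lambda>s. D t * ((f s - f t) / (s - t))) \<longlongrightarrow> D t * f') (at_right t)"
    by (intro tendsto_intros)
  then have ev2: "eventually (\<lambda>s. D t * ((f s - f t) / (s - t)) < D t * f' + e/3) (at_right t)"
    using e by (intro order_tendstoD(2)) auto
  have ev3: "eventually (\<lambda>s. D s \<le> D t + (c + e') * (s - t)) (at_right t)"
    using D e' unfolding right_dini_le_def by auto
  show "eventually (\<lambda>s. D s * f s \<le> D t * f t + (c * f t + D t * f' + e) * (s - t)) (at_right t)"
    using ev1 ev2 ev3 eventually_at_right_less[of t]
  proof eventually_elim
    case (elim s)
    define w where "w = s - t"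
    have w: "w > 0" using elim by (simp add: w_def)
    have "(D s - D t) * f s \<le> ((c + e') * w) * f s"
      using elim f_pos[of s] by (intro mult_right_mono) (auto simp: w_def)
    also have "\<dots> \<le> w * ((c + e') * f t + e/3)" using elim w by (simp add: mult_left_mono)
    finally have A: "(D s - D t) * f s \<le> w * ((c + e') * f t + e/3)" .
    have "D t * (f s - f t) = w * (D t * ((f s - f t) / (s - t)))" using w by (simp add: w_def)
    also have "\<dots> \<le> w * (D t * f' + e/3)" using elim w by (intro mult_left_mono) auto
    finally have B: "D t * (f s - f t) \<le> w * (D t * f' + e/3)" .
    have "D s * f s - D t * f t = (D s - D t) * f s + D t * (f s - f t)" by (simp add: algebra_simps)
    also have "\<dots> \<le> w * (c * f t + D t * f') + w * (e' * f t) + w * (2*e/3)"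
      using A B by (simp add: algebra_simps)
    also have "\<dots> = w * (c * f t + D t * f' + e)" unfolding e'(2) by (simp add: algebra_simps)
    finally show ?case by (simp add: w_def algebra_simps)
  qed
qed

lemma right_dini_gronwall:
  fixes D f :: "real \<Rightarrow> real"
  assumes ab: "a \<le> b" and C: "countable C"
    and D: "continuous_on {a..b} D" and f: "f integrable_on {a..b}"
    and f_cont: "\<And>t. t \<in> {a..<b} \<Longrightarrow> t \<notin> C \<Longrightarrow> continuous (at t within {a..b}) f"
    and dini: "\<And>t. t \<in> {a..<b} \<Longrightarrow> t \<notin> C \<Longrightarrow> right_dini_le D t (f t * D t)"
  shows "D b \<le> D a * exp (integral {a..b} f)"
proof -
  define E where "E s = integral {a..s} f" for s
  define g where "g s = D s * exp (- E s)" for s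
  have "continuous_on {a..b} E"
    unfolding E_def by (rule indefinite_integral_continuous_1[OF f])
  then have "continuous_on {a..b} g" unfolding g_def by (intro continuous_intros D)
  moreover have "right_dini_le g t 0" if t: "t \<in> {a..<b}" "t \<notin> C" for t
  proof -
    have "(E has_vector_derivative f t) (at t within {a..b} - {})"
      unfolding E_def using t f_cont[OF t]
      by (intro integral_has_vector_derivative_continuous_at[OF f]) auto
    then have "(E has_real_derivative f t) (at t within {a..b})"
      by (simp add: has_real_derivative_iff_has_vector_derivative)
    then have "(E has_real_derivative f t) (at t within {t..b})"
      by (rule DERIV_subset) (use t in auto)
    then have "(E has_real_derivative f t) (at_right t)"
      using t at_within_Icc_at_right[of t b] by simp
    then have "((\<lambda>s. exp (- E s)) has_real_derivative exp (- E t) * - f t) (at_right t)"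
      by (intro derivative_intros)
    from right_dini_le_mult[OF dini[OF t] this] show ?thesis
      unfolding g_def by (simp add: algebra_simps)
  qed
  ultimately have "g b \<le> g a" using right_dini_nonpos_imp_le[OF ab _ C] by blast
  then have "D b * exp (- E b) \<le> D a" by (simp add: g_def E_def)
  then have "D b * exp (- E b) * exp (E b) \<le> D a * exp (E b)" by (intro mult_right_mono) auto
  then show ?thesis by (simp add: E_def exp_minus field_simps)
qed

lemma tendsto_Min_finite:
  fixes F :: "'k \<Rightarrow> 'a \<Rightarrow> real"
  assumes "finite P" "P \<noteq> {}" "\<And>p. p \<in> P \<Longrightarrow> (F p \<longlongrightarrow> l p) net"
  shows "((\<lambda>s. Min ((\<lambda>p. F p s) ` P)) \<longlongrightarrow> Min (l ` P)) net"
  using assms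
proof (induction P rule: finite_ne_induct)
  case (insert x A)
  then have "((\<lambda>s. min (F x s) (Min ((\<lambda>p. F p s) ` A))) \<longlongrightarrow> min (l x) (Min (l ` A))) net"
    by (intro tendsto_min) auto
  then show ?case using insert by simp
qed simp

lemma tendsto_Max_finite:
  fixes F :: "'k \<Rightarrow> 'a \<Rightarrow> real"
  assumes "finite P" "P \<noteq> {}" "\<And>p. p \<in> P \<Longrightarrow> (F p \<longlongrightarrow> l p) net"
  shows "((\<lambda>s. Max ((\<lambda>p. F p s) ` P)) \<longlongrightarrow> Max (l ` P)) net"
  using assms
proof (induction P rule: finite_ne_induct)
  case (insert x A)
  then have "((\<lambda>s. max (F x s) (Max ((\<lambda>p. F p s) ` A))) \<longlongrightarrow> max (l x) (Max (l ` A))) net"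
    by (intro tendsto_max) auto
  then show ?case using insert by simp
qed simp

lemma continuous_on_Max_finite:
  fixes u :: "'k \<Rightarrow> real \<Rightarrow> real"
  assumes "finite K" "K \<noteq> {}" "\<And>k. k \<in> K \<Longrightarrow> continuous_on S (u k)"
  shows "continuous_on S (\<lambda>s. Max ((\<lambda>k. u k s) ` K))"
  using assms unfolding continuous_on_def by (auto intro: tendsto_Max_finite)

lemma sin_diff_bounds:
  fixes x y r :: real
  assumes "x \<le> y" "\<bar>x\<bar> \<le> r" "\<bar>y\<bar> \<le> r" "r < pi/2"
  shows "cos r * (y - x) \<le> sin y - sin x" "sin y - sin x \<le> y - x"
proof -
  have "cos r * (y - x) \<le> sin y - sin x \<and> sin y - sin x \<le> y - x"
  proof (cases "x = y")
    case False
    then have "x < y" using assms by simp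
    then obtain z where z: "x < z" "z < y" "sin y - sin x = (y - x) * cos z"
      using MVT2[of x y sin cos] by (auto intro: DERIV_sin)
    have "cos r \<le> cos \<bar>z\<bar>" using z assms by (intro cos_monotone_0_pi_le) auto
    then show ?thesis using z \<open>x < y\<close> by (auto intro: mult_left_mono simp: mult.commute)
  qed simp
  then show "cos r * (y - x) \<le> sin y - sin x" "sin y - sin x \<le> y - x" by auto
qed

lemma mult_sin_diff_le:
  fixes x y r a :: real
  assumes "x \<le> y" "\<bar>x\<bar> \<le> r" "\<bar>y\<bar> \<le> r" "r < pi/2"
  shows "a * (sin x - sin y) \<le> (if a > 0 then a * cos r else a) * (x - y)"
proof (cases "a > 0")
  case True
  have "a * (cos r * (y - x)) \<le> a * (sin y - sin x)"
    using sin_diff_bounds(1)[OF assms] True by (intro mult_left_mono) auto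
  then show ?thesis using True by (simp add: algebra_simps)
next
  case False
  have "(- a) * (sin y - sin x) \<le> (- a) * (y - x)"
    using sin_diff_bounds(2)[OF assms] False by (intro mult_left_mono) auto
  then show ?thesis using False by (simp add: algebra_simps)
qed

definition coupling :: "('n::finite \<Rightarrow> 'n \<Rightarrow> real \<Rightarrow> real) \<Rightarrow> real \<Rightarrow> ('n \<Rightarrow> real) \<Rightarrow> 'n \<Rightarrow> real" where
  "coupling a t x i = (\<Sum>j\<in>UNIV. a i j t * sin (x j - x i))"

definition pair_rate :: "('n::finite \<Rightarrow> 'n \<Rightarrow> real \<Rightarrow> real) \<Rightarrow> real \<Rightarrow> 'n \<Rightarrow> 'n \<Rightarrow> real \<Rightarrow> real" where
  "pair_rate a r i j t = c_r r a i j t + (\<Sum>k\<in>UNIV - {i, j}. min (a_tilde r a i k t) (a_tilde r a j k t))"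

lemma xi_eq_Min_pair_rate:
  "xi a r t = - Min ((\<lambda>(i, j). pair_rate a r i j t) ` {(i, j). i \<noteq> j})"
proof -
  have "{c_r r a i j t + (\<Sum>k\<in>UNIV - {i, j}. min (a_tilde r a i k t) (a_tilde r a j k t)) | i j. i \<noteq> j}
      = (\<lambda>(i, j). pair_rate a r i j t) ` {(i, j). i \<noteq> j}"
    by (auto simp: pair_rate_def)
  then show ?thesis by (simp add: xi_def)
qed

lemma neg_pair_rate_le_xi:
  fixes a :: "'n::finite \<Rightarrow> 'n \<Rightarrow> real \<Rightarrow> real"
  assumes "p \<noteq> q"
  shows "- pair_rate a r p q t \<le> xi a r t"
  unfolding xi_eq_Min_pair_rate using assms by (auto intro: Min_le)

lemma coupling_pair_terms_le:
  fixes x y :: "'n::finite \<Rightarrow> real"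
  assumes r: "r < pi/2" and xr: "\<And>i j. \<bar>x i - x j\<bar> \<le> r" and yr: "\<And>i j. \<bar>y i - y j\<bar> \<le> r"
    and pq: "x q - y q \<le> x p - y p"
  shows "a p q t * (sin (x q - x p) - sin (y q - y p)) - a q p t * (sin (x p - x q) - sin (y p - y q))
     \<le> - c_r r a p q t * ((x p - y p) - (x q - y q))"
proof -
  have "sin (x p - x q) = - sin (x q - x p)" "sin (y p - y q) = - sin (y q - y p)"
    by (metis minus_diff_eq sin_minus)+
  then have "a p q t * (sin (x q - x p) - sin (y q - y p)) - a q p t * (sin (x p - x q) - sin (y p - y q))
      = (a p q t + a q p t) * (sin (x q - x p) - sin (y q - y p))"
    by (simp add: algebra_simps)
  also have "\<dots> \<le> c_r r a p q t * ((x q - x p) - (y q - y p))"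
    unfolding c_r_def by (rule mult_sin_diff_le) (use pq xr yr r in auto)
  finally show ?thesis by (simp add: algebra_simps)
qed

lemma coupling_third_terms_le:
  fixes x y :: "'n::finite \<Rightarrow> real"
  assumes r: "r < pi/2" and xr: "\<And>i j. \<bar>x i - x j\<bar> \<le> r" and yr: "\<And>i j. \<bar>y i - y j\<bar> \<le> r"
    and kp: "x k - y k \<le> x p - y p" and qk: "x q - y q \<le> x k - y k"
  shows "a p k t * (sin (x k - x p) - sin (y k - y p)) - a q k t * (sin (x k - x q) - sin (y k - y q))
     \<le> - min (a_tilde r a p k t) (a_tilde r a q k t) * ((x p - y p) - (x q - y q))"
proof -
  define m where "m = min (a_tilde r a p k t) (a_tilde r a q k t)"
  have "a p k t * (sin (x k - x p) - sin (y k - y p)) \<le> a_tilde r a p k t * ((x k - x p) - (y k - y p))"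
    unfolding a_tilde_def by (rule mult_sin_diff_le) (use kp xr yr r in auto)
  also have "\<dots> \<le> m * ((x k - x p) - (y k - y p))"
    using kp by (intro mult_right_mono_neg) (auto simp: m_def)
  finally have p: "a p k t * (sin (x k - x p) - sin (y k - y p)) \<le> m * ((x k - x p) - (y k - y p))" .
  have "a q k t * (sin (y k - y q) - sin (x k - x q)) \<le> a_tilde r a q k t * ((y k - y q) - (x k - x q))"
    unfolding a_tilde_def by (rule mult_sin_diff_le) (use qk xr yr r in auto)
  also have "\<dots> \<le> m * ((y k - y q) - (x k - x q))"
    using qk by (intro mult_right_mono_neg) (auto simp: m_def)
  finally have q: "a q k t * (sin (y k - y q) - sin (x k - x q)) \<le> m * ((y k - y q) - (x k - x q))" .
  show ?thesis using p q unfolding m_def[symmetric] by (simp add: algebra_simps)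
qed

lemma sum_remove_two:
  fixes f :: "'n::finite \<Rightarrow> 'a::comm_monoid_add"
  assumes "p \<noteq> q"
  shows "(\<Sum>j\<in>UNIV. f j) = f p + f q + (\<Sum>j\<in>UNIV - {p, q}. f j)"
proof -
  have "(\<Sum>j\<in>UNIV. f j) = f p + (\<Sum>j\<in>UNIV - {p}. f j)"
    by (simp add: sum.remove[of UNIV p])
  also have "(\<Sum>j\<in>UNIV - {p}. f j) = f q + (\<Sum>j\<in>UNIV - {p} - {q}. f j)"
    using assms by (intro sum.remove) auto
  also have "UNIV - {p} - {q} = UNIV - {p, q}" by auto
  finally show ?thesis by (simp add: add.assoc)
qed

lemma coupling_gap_le:
  fixes a :: "'n::finite \<Rightarrow> 'n \<Rightarrow> real \<Rightarrow> real" and x y :: "'n \<Rightarrow> real"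
  assumes diag: "\<And>i. a i i t = 0" and r: "r < pi/2"
    and xr: "\<And>i j. \<bar>x i - x j\<bar> \<le> r" and yr: "\<And>i j. \<bar>y i - y j\<bar> \<le> r"
    and pq: "p \<noteq> q"
    and max: "\<And>k. x k - y k \<le> x p - y p" and min: "\<And>k. x q - y q \<le> x k - y k"
  shows "(coupling a t x p - coupling a t y p) - (coupling a t x q - coupling a t y q)
     \<le> - pair_rate a r p q t * ((x p - y p) - (x q - y q))"
proof -
  define F where "F i j = a i j t * (sin (x j - x i) - sin (y j - y i))" for i j
  have "coupling a t x i - coupling a t y i = (\<Sum>j\<in>UNIV. F i j)" for i
    by (simp add: coupling_def F_def sum_subtractf right_diff_distrib)
  moreover have "F p p = 0" "F q q = 0" by (simp_all add: F_def diag)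
  ultimately have "(coupling a t x p - coupling a t y p) - (coupling a t x q - coupling a t y q)
      = (F p q - F q p) + (\<Sum>k\<in>UNIV - {p, q}. F p k - F q k)"
    using sum_remove_two[OF pq, of "F p"] sum_remove_two[OF pq, of "F q"] by (simp add: sum_subtractf)
  also have "\<dots> \<le> - c_r r a p q t * ((x p - y p) - (x q - y q))
      + (\<Sum>k\<in>UNIV - {p, q}. - min (a_tilde r a p k t) (a_tilde r a q k t) * ((x p - y p) - (x q - y q)))"
    unfolding F_def
    by (intro add_mono sum_mono coupling_pair_terms_le coupling_third_terms_le r xr yr max min)
  also have "\<dots> = - c_r r a p q t * ((x p - y p) - (x q - y q))
      + - (\<Sum>k\<in>UNIV - {p, q}. min (a_tilde r a p k t) (a_tilde r a q k t)) * ((x p - y p) - (x q - y q))"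
    by (simp only: sum_distrib_right[symmetric] sum_negf)
  also have "\<dots> = - pair_rate a r p q t * ((x p - y p) - (x q - y q))"
    by (simp add: pair_rate_def algebra_simps)
  finally show ?thesis .
qed

lemma if_pos_mult_eq: "(if v > 0 then v * c else v) = c * max v 0 + min v (0::real)"
  by auto

lemma continuous_within_xi:
  fixes a :: "'n::finite \<Rightarrow> 'n \<Rightarrow> real \<Rightarrow> real"
  assumes two: "\<exists>p q::'n. p \<noteq> q" and cont: "\<And>i j. continuous (at t within S) (a i j)"
  shows "continuous (at t within S) (xi a r)"
proof -
  have lim: "(a i j \<longlongrightarrow> a i j t) (at t within S)" for i j
    using cont[of i j] by (simp add: continuous_within)
  have "((\<lambda>s. pair_rate a r i j s) \<longlongrightarrow> pair_rate a r i j t) (at t within S)" for i j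
    unfolding pair_rate_def c_r_def a_tilde_def if_pos_mult_eq by (intro tendsto_intros lim)
  then have "((\<lambda>s. Min ((\<lambda>(i, j). pair_rate a r i j s) ` {(i, j). i \<noteq> j}))
        \<longlongrightarrow> Min ((\<lambda>(i, j). pair_rate a r i j t) ` {(i::'n, j). i \<noteq> j})) (at t within S)"
    using two by (intro tendsto_Min_finite) (auto split: prod.splits)
  then show ?thesis
    unfolding continuous_within xi_eq_Min_pair_rate by (intro tendsto_intros)
qed

lemma xi_le_sum_abs:
  fixes a :: "'n::finite \<Rightarrow> 'n \<Rightarrow> real \<Rightarrow> real"
  assumes two: "\<exists>p q::'n. p \<noteq> q"
  shows "xi a r t \<le> 2 * (\<Sum>i\<in>UNIV. \<Sum>k\<in>UNIV. \<bar>a i k t\<bar>)"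
proof -
  let ?P = "(\<lambda>(i, j). pair_rate a r i j t) ` {(i::'n, j). i \<noteq> j}"
  have "Min ?P \<in> ?P" using two by (intro Min_in) auto
  then obtain p q where pq: "p \<noteq> q" "xi a r t = - pair_rate a r p q t"
    by (auto simp: xi_eq_Min_pair_rate)
  define R where "R i = (\<Sum>k\<in>UNIV. \<bar>a i k t\<bar>)" for i
  have damp: "\<bar>if v > 0 then v * cos r else v\<bar> \<le> \<bar>v\<bar>" for v
    by (auto simp: abs_mult intro: mult_left_le)
  have entry: "\<bar>a i j t\<bar> \<le> R i" for i j
    unfolding R_def by (rule member_le_sum) auto
  have "- c_r r a p q t \<le> R p + R q"
    using damp[of "a p q t + a q p t"] entry[of p q] entry[of q p] unfolding c_r_def by linarith
  moreover have "- (\<Sum>k\<in>UNIV - {p, q}. min (a_tilde r a p k t) (a_tilde r a q k t))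
      \<le> (\<Sum>k\<in>UNIV. \<bar>a p k t\<bar> + \<bar>a q k t\<bar>)"
  proof -
    have "- (\<Sum>k\<in>UNIV - {p, q}. min (a_tilde r a p k t) (a_tilde r a q k t))
        \<le> (\<Sum>k\<in>UNIV - {p, q}. \<bar>a p k t\<bar> + \<bar>a q k t\<bar>)"
      unfolding sum_negf[symmetric] a_tilde_def
      by (rule sum_mono) (use damp in \<open>smt (verit)\<close>)
    also have "\<dots> \<le> (\<Sum>k\<in>UNIV. \<bar>a p k t\<bar> + \<bar>a q k t\<bar>)" by (intro sum_mono2) auto
    finally show ?thesis .
  qed
  moreover have "R p + R q \<le> (\<Sum>i\<in>UNIV. R i)"
    using pq(1) sum_remove_two[OF pq(1), of R] by (simp add: R_def sum_nonneg)
  ultimately show ?thesis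
    using pq(2) by (simp add: pair_rate_def R_def sum.distrib)
qed

text \<open>max_{i,j} |(x_i - x_j) - (y_i - y_j)|, written without absolute values so that along
  solutions it is a maximum of differentiable functions.\<close>
definition pd_dist :: "('n::finite \<Rightarrow> real) \<Rightarrow> ('n \<Rightarrow> real) \<Rightarrow> real" where
  "pd_dist x y = Max ((\<lambda>(i, j). (x i - y i) - (x j - y j)) ` UNIV)"

lemma pd_dist_ge: "(x i - y i) - (x j - y j) \<le> pd_dist x y"
  unfolding pd_dist_def by (rule Max_ge) (auto intro: image_eqI[where x="(i, j)"])

lemma pd_dist_nonneg: "0 \<le> pd_dist x y"
  using pd_dist_ge[where i=undefined and j=undefined] by simp

lemma abs_pd_diff_le_pd_dist: "\<bar>(x i - x j) - (y i - y j)\<bar> \<le> pd_dist x y"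
  using pd_dist_ge[of x i y j] pd_dist_ge[of x j y i] unfolding abs_le_iff by linarith

lemma pd_dist_eq_Max_abs: "pd_dist x y = Max {\<bar>(x k - x l) - (y k - y l)\<bar> | k l. True}"
proof -
  have S: "{\<bar>(x k - x l) - (y k - y l)\<bar> | k l. True} = (\<lambda>(k, l). \<bar>(x k - x l) - (y k - y l)\<bar>) ` UNIV"
    by auto
  show ?thesis
  proof (rule antisym)
    show "pd_dist x y \<le> Max {\<bar>(x k - x l) - (y k - y l)\<bar> | k l. True}"
      unfolding pd_dist_def
    proof (rule Max.boundedI)
      fix z assume "z \<in> (\<lambda>(i, j). (x i - y i) - (x j - y j)) ` UNIV"
      then obtain i j where "z = (x i - y i) - (x j - y j)" by auto
      then have "z \<le> \<bar>(x i - x j) - (y i - y j)\<bar>" by simp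
      also have "\<dots> \<le> Max {\<bar>(x k - x l) - (y k - y l)\<bar> | k l. True}"
        unfolding S by (rule Max_ge) auto
      finally show "z \<le> Max {\<bar>(x k - x l) - (y k - y l)\<bar> | k l. True}" .
    qed auto
    show "Max {\<bar>(x k - x l) - (y k - y l)\<bar> | k l. True} \<le> pd_dist x y"
      unfolding S by (rule Max.boundedI) (auto intro: abs_pd_diff_le_pd_dist)
  qed
qed

lemma continuous_on_pd_dist:
  fixes \<phi> \<theta> :: "real \<Rightarrow> 'n::finite \<Rightarrow> real"
  assumes "\<And>i. continuous_on S (\<lambda>s. \<phi> s i)" "\<And>i. continuous_on S (\<lambda>s. \<theta> s i)"
  shows "continuous_on S (\<lambda>s. pd_dist (\<phi> s) (\<theta> s))"
proof -
  have "continuous_on S (\<lambda>s. Max ((\<lambda>k. case k of (i, j) \<Rightarrow> (\<phi> s i - \<theta> s i) - (\<phi> s j - \<theta> s j)) ` UNIV))"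
  proof (rule continuous_on_Max_finite)
    fix k :: "'n \<times> 'n"
    show "continuous_on S (\<lambda>s. case k of (i, j) \<Rightarrow> (\<phi> s i - \<theta> s i) - (\<phi> s j - \<theta> s j))"
      by (cases k) (auto intro!: continuous_intros assms)
  qed auto
  then show ?thesis by (simp add: pd_dist_def split_def)
qed

lemma coupling_gap_le_xi_pd_dist:
  fixes a :: "'n::finite \<Rightarrow> 'n \<Rightarrow> real \<Rightarrow> real" and x y :: "'n \<Rightarrow> real"
  assumes diag: "\<And>i. a i i t = 0" and r: "r < pi/2"
    and xr: "\<And>i j. \<bar>x i - x j\<bar> \<le> r" and yr: "\<And>i j. \<bar>y i - y j\<bar> \<le> r"
    and active: "(x p - y p) - (x q - y q) = pd_dist x y"
  shows "(coupling a t x p - coupling a t y p) - (coupling a t x q - coupling a t y q)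
     \<le> xi a r t * pd_dist x y"
proof (cases "p = q")
  case True
  then show ?thesis using active by simp
next
  case False
  have max: "x k - y k \<le> x p - y p" for k
    using pd_dist_ge[of x k y q] active by simp
  have min: "x q - y q \<le> x k - y k" for k
    using pd_dist_ge[of x p y k] active by simp
  have "(coupling a t x p - coupling a t y p) - (coupling a t x q - coupling a t y q)
      \<le> - pair_rate a r p q t * pd_dist x y"
    using coupling_gap_le[where a=a and t=t and x=x and y=y, OF diag r xr yr False max min] active
    by simp
  also have "\<dots> \<le> xi a r t * pd_dist x y"
    using neg_pair_rate_le_xi[OF False] pd_dist_nonneg by (intro mult_right_mono) auto
  finally show ?thesis .
qed

lemma pd_dist_right_dini_le:
  fixes \<phi> \<theta> :: "real \<Rightarrow> 'n::finite \<Rightarrow> real"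
  assumes d\<phi>: "\<And>i. ((\<lambda>s. \<phi> s i) has_real_derivative \<omega> i t + coupling a t (\<phi> t) i) (at_right t)"
    and d\<theta>: "\<And>i. ((\<lambda>s. \<theta> s i) has_real_derivative \<omega> i t + coupling a t (\<theta> t) i) (at_right t)"
    and diag: "\<And>i. a i i t = 0" and r: "r < pi/2"
    and \<phi>r: "\<And>i j. \<bar>\<phi> t i - \<phi> t j\<bar> \<le> r" and \<theta>r: "\<And>i j. \<bar>\<theta> t i - \<theta> t j\<bar> \<le> r"
  shows "right_dini_le (\<lambda>s. pd_dist (\<phi> s) (\<theta> s)) t (xi a r t * pd_dist (\<phi> t) (\<theta> t))"
proof -
  define u where "u k s = (case k of (i, j) \<Rightarrow> (\<phi> s i - \<theta> s i) - (\<phi> s j - \<theta> s j))"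
    for k :: "'n \<times> 'n" and s
  define v where "v i = coupling a t (\<phi> t) i - coupling a t (\<theta> t) i" for i
  have pd: "pd_dist (\<phi> s) (\<theta> s) = Max ((\<lambda>k. u k s) ` UNIV)" for s
    by (simp add: pd_dist_def u_def split_def)
  have du: "(u (i, j) has_real_derivative v i - v j) (at_right t)" for i j
  proof -
    have "((\<lambda>s. (\<phi> s i - \<theta> s i) - (\<phi> s j - \<theta> s j)) has_real_derivative
        ((\<omega> i t + coupling a t (\<phi> t) i) - (\<omega> i t + coupling a t (\<theta> t) i))
        - ((\<omega> j t + coupling a t (\<phi> t) j) - (\<omega> j t + coupling a t (\<theta> t) j))) (at_right t)"
      by (intro derivative_intros d\<phi> d\<theta>)
    then show ?thesis by (simp add: u_def[abs_def] v_def)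
  qed
  have active: "v p - v q \<le> xi a r t * pd_dist (\<phi> t) (\<theta> t)"
    if "u (p, q) t = pd_dist (\<phi> t) (\<theta> t)" for p q
    using coupling_gap_le_xi_pd_dist[where a=a and t=t, OF diag r \<phi>r \<theta>r] that
    by (simp add: u_def v_def)
  have "right_dini_le (\<lambda>s. Max ((\<lambda>k. u k s) ` UNIV)) t (xi a r t * pd_dist (\<phi> t) (\<theta> t))"
  proof (rule right_dini_le_Max)
    fix k :: "'n \<times> 'n"
    obtain p q where k: "k = (p, q)" by fastforce
    show "(u k \<longlongrightarrow> u k t) (at_right t)"
      using DERIV_continuous[OF du[of p q]] k by (simp add: continuous_within)
    assume "u k t = Max ((\<lambda>k. u k t) ` UNIV)"
    then show "right_dini_le (u k) t (xi a r t * pd_dist (\<phi> t) (\<theta> t))"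
      using k active[of p q] du[of p q] by (intro has_real_derivative_imp_right_dini_le) (auto simp: pd)
  qed auto
  then show ?thesis by (simp add: pd)
qed

lemma in_Ar_abs_le: "in_Ar r x \<Longrightarrow> 0 \<le> r \<Longrightarrow> \<bar>x i - x j\<bar> \<le> r"
  unfolding in_Ar_def by (cases "i = j") auto

lemma tvkr_solution_has_right_derivative:
  assumes "tvkr_solution \<omega> a \<theta>"
  shows "\<exists>S. countable S \<and> (\<forall>t\<in>{0..} - S. \<forall>i.
    ((\<lambda>s. \<theta> s i) has_real_derivative \<omega> i t + coupling a t (\<theta> t) i) (at_right t))"
proof -
  obtain S where S: "countable S"
    "\<And>i t. t \<in> {0..} - S \<Longrightarrow> ((\<lambda>s. \<theta> s i) has_real_derivative
      (\<omega> i t + (\<Sum>j\<in>UNIV. a i j t * sin (\<theta> t j - \<theta> t i)))) (at t within {0..})"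
    using assms unfolding tvkr_solution_def by blast
  have "((\<lambda>s. \<theta> s i) has_real_derivative \<omega> i t + coupling a t (\<theta> t) i) (at_right t)"
    if "t \<in> {0..} - S" for i t
  proof -
    have "{t<..} \<subseteq> {0..}" using that by auto
    then show ?thesis using DERIV_subset[OF S(2)[OF that]] unfolding coupling_def by simp
  qed
  then show ?thesis using S(1) by blast
qed

lemma countable_discontinuities_if_piecewise_continuous:
  assumes "piecewise_continuous f"
  shows "countable {t. t \<ge> 0 \<and> \<not> continuous (at t within {0..}) f}"
proof -
  have "{t. t \<ge> 0 \<and> \<not> continuous (at t within {0..}) f}
      = (\<Union>n::nat. {t \<in> {0..real n}. \<not> continuous (at t within {0..}) f})"
    by (auto intro: real_arch_simple)
  moreover have "finite {t \<in> {0..real n}. \<not> continuous (at t within {0..}) f}" for n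
    using assms unfolding piecewise_continuous_def by blast
  ultimately show ?thesis by (simp add: countable_finite)
qed

lemma pd_dist_solutions_le:
  fixes \<omega> :: "'n::finite \<Rightarrow> real \<Rightarrow> real" and a :: "'n \<Rightarrow> 'n \<Rightarrow> real \<Rightarrow> real"
  assumes two: "\<exists>p q::'n. p \<noteq> q"
    and a_pc: "\<And>i j. piecewise_continuous (a i j)" and diag: "\<And>i t. a i i t = 0"
    and r: "0 \<le> r" "r < pi / 2" and inv: "Ar_invariant r \<omega> a"
    and s\<phi>: "tvkr_solution \<omega> a \<phi>" and s\<theta>: "tvkr_solution \<omega> a \<theta>"
    and \<phi>0: "in_Ar r (\<phi> 0)" and \<theta>0: "in_Ar r (\<theta> 0)"
    and b: "b \<ge> 0" and int: "xi a r integrable_on {0..b}"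
  shows "pd_dist (\<phi> b) (\<theta> b) \<le> pd_dist (\<phi> 0) (\<theta> 0) * exp (integral {0..b} (xi a r))"
proof -
  obtain S\<phi> where S\<phi>: "countable S\<phi>" "\<forall>t\<in>{0..} - S\<phi>. \<forall>i.
      ((\<lambda>s. \<phi> s i) has_real_derivative \<omega> i t + coupling a t (\<phi> t) i) (at_right t)"
    using tvkr_solution_has_right_derivative[OF s\<phi>] by blast
  obtain S\<theta> where S\<theta>: "countable S\<theta>" "\<forall>t\<in>{0..} - S\<theta>. \<forall>i.
      ((\<lambda>s. \<theta> s i) has_real_derivative \<omega> i t + coupling a t (\<theta> t) i) (at_right t)"
    using tvkr_solution_has_right_derivative[OF s\<theta>] by blast
  define Disc where "Disc = (\<Union>i. \<Union>j. {t. t \<ge> 0 \<and> \<not> continuous (at t within {0..}) (a i j)})"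
  define C where "C = S\<phi> \<union> S\<theta> \<union> Disc"
  have "countable Disc"
    unfolding Disc_def using countable_discontinuities_if_piecewise_continuous[OF a_pc] by auto
  then have C: "countable C" using S\<phi>(1) S\<theta>(1) by (simp add: C_def)
  have cont: "continuous_on {0..b} (\<lambda>s. pd_dist (\<phi> s) (\<theta> s))"
    using s\<phi> s\<theta> unfolding tvkr_solution_def
    by (intro continuous_on_pd_dist) (auto intro: continuous_on_subset)
  have xi_cont: "continuous (at t within {0..b}) (xi a r)" if t: "t \<in> {0..<b}" "t \<notin> C" for t
  proof (rule continuous_within_xi[OF two])
    fix i j
    have "continuous (at t within {0..}) (a i j)" using t by (auto simp: C_def Disc_def)
    then show "continuous (at t within {0..b}) (a i j)" by (rule continuous_within_subset) auto
  qed
  have dini: "right_dini_le (\<lambda>s. pd_dist (\<phi> s) (\<theta> s)) t (xi a r t * pd_dist (\<phi> t) (\<theta> t))"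
    if t: "t \<in> {0..<b}" "t \<notin> C" for t
  proof -
    have "t \<in> {0..} - S\<phi>" "t \<in> {0..} - S\<theta>" using t by (auto simp: C_def)
    then have d\<phi>: "((\<lambda>s. \<phi> s i) has_real_derivative \<omega> i t + coupling a t (\<phi> t) i) (at_right t)"
      and d\<theta>: "((\<lambda>s. \<theta> s i) has_real_derivative \<omega> i t + coupling a t (\<theta> t) i) (at_right t)" for i
      using S\<phi>(2) S\<theta>(2) by simp_all
    have "\<forall>t\<ge>0. in_Ar r (\<phi> t)" "\<forall>t\<ge>0. in_Ar r (\<theta> t)"
      using inv s\<phi> s\<theta> \<phi>0 \<theta>0 unfolding Ar_invariant_def by simp_all
    then have "in_Ar r (\<phi> t)" "in_Ar r (\<theta> t)" using t by simp_all
    then have "\<bar>\<phi> t i - \<phi> t j\<bar> \<le> r" "\<bar>\<theta> t i - \<theta> t j\<bar> \<le> r" for i j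
      by (simp_all add: in_Ar_abs_le r(1))
    moreover have "a i i t = 0" for i by (rule diag)
    ultimately show ?thesis
      using pd_dist_right_dini_le[where a=a and t=t and \<phi>=\<phi> and \<theta>=\<theta> and \<omega>=\<omega> and r=r, OF d\<phi> d\<theta> _ r(2)] by blast
  qed
  from right_dini_gronwall[OF b C cont int xi_cont dini] show ?thesis .
qed

text \<open>A non-integrable function has integral 0 by convention, so a negative integral already
  certifies integrability.\<close>
lemma integrable_if_integral_neg:
  fixes f :: "real \<Rightarrow> real"
  assumes "integral S f < 0"
  shows "f integrable_on S"
proof (rule ccontr)
  assume "\<not> f integrable_on S"
  then have "integral S f = 0" by (rule not_integrable_integral)
  then show False using assms by simp
qed

lemma window_integral_if_average_le:
  fixes f :: "real \<Rightarrow> real"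
  assumes T: "T > 0" and \<eta>: "\<eta> > 0" and avg: "(1 / T) * integral {t..t+T} f \<le> - \<eta>"
  shows "f integrable_on {t..t+T} \<and> integral {t..t+T} f \<le> - \<eta> * T"
proof -
  have "integral {t..t+T} f \<le> - \<eta> * T" using avg T by (simp add: field_simps)
  moreover have "- \<eta> * T < 0" using T \<eta> by simp
  ultimately show ?thesis using integrable_if_integral_neg[of "{t..t+T}" f] by linarith
qed

lemma integral_multiple_windows_le:
  fixes f :: "real \<Rightarrow> real"
  assumes T: "T > 0"
    and win: "\<And>t. t \<ge> 0 \<Longrightarrow> f integrable_on {t..t+T} \<and> integral {t..t+T} f \<le> - \<eta> * T"
  shows "f integrable_on {0..real n * T} \<and> integral {0..real n * T} f \<le> - \<eta> * (real n * T)"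
proof (induction n)
  case 0
  then show ?case using integrable_on_refl[of f 0] by simp
next
  case (Suc n)
  have nT: "0 \<le> real n * T" using T by simp
  have w: "f integrable_on {real n * T..real n * T + T}" "integral {real n * T..real n * T + T} f \<le> - \<eta> * T"
    using win[OF nT] by auto
  have int: "f integrable_on {0..real n * T + T}"
    by (rule Henstock_Kurzweil_Integration.integrable_combine[where c="real n * T"])
      (use Suc.IH w(1) T in auto)
  have "integral {0..real n * T + T} f
      = integral {0..real n * T} f + integral {real n * T..real n * T + T} f"
    by (rule Henstock_Kurzweil_Integration.integral_combine[symmetric]) (use int T nT in simp_all)
  also have "\<dots> \<le> - \<eta> * (real n * T + T)" using Suc.IH w(2) by (simp add: algebra_simps)
  finally show ?case using int by (simp add: algebra_simps)
qed

lemma integrable_on_Icc_if_windows: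
  fixes f :: "real \<Rightarrow> real"
  assumes T: "T > 0"
    and win: "\<And>t. t \<ge> 0 \<Longrightarrow> f integrable_on {t..t+T} \<and> integral {t..t+T} f \<le> - \<eta> * T"
    and t: "t \<ge> 0"
  shows "f integrable_on {0..t}"
proof -
  obtain n :: nat where "t / T \<le> real n" using real_arch_simple by blast
  then have "t \<le> real n * T" using T by (simp add: field_simps)
  then show ?thesis
    using integral_multiple_windows_le[OF T win, of n] t by (auto intro: integrable_subinterval_real)
qed

lemma integral_le_if_windows:
  fixes f :: "real \<Rightarrow> real"
  assumes T: "T > 0" and \<eta>: "\<eta> \<ge> 0"
    and win: "\<And>t. t \<ge> 0 \<Longrightarrow> f integrable_on {t..t+T} \<and> integral {t..t+T} f \<le> - \<eta> * T"
    and B: "\<And>s. s \<ge> 0 \<Longrightarrow> f s \<le> B" "B \<ge> 0"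
    and t: "t \<ge> 0"
  shows "integral {0..t} f \<le> - \<eta> * t + (\<eta> + B) * T"
proof -
  define n where "n = nat \<lfloor>t / T\<rfloor>"
  have "real n \<le> t / T" "t / T < real n + 1"
    using t T by (auto simp: n_def)
  then have n: "real n * T \<le> t" "t < real n * T + T" using T by (auto simp: field_simps)
  have nT: "0 \<le> real n * T" using T by simp
  have int: "f integrable_on {0..t}" by (rule integrable_on_Icc_if_windows[OF T win t])
  have "integral {0..t} f = integral {0..real n * T} f + integral {real n * T..t} f"
    using int n nT by (intro Henstock_Kurzweil_Integration.integral_combine[symmetric]) auto
  also have "integral {real n * T..t} f \<le> integral {real n * T..t} (\<lambda>_. B)"
    using int nT B(1) by (intro integral_le integrable_subinterval_real[OF int]) auto
  also have "\<dots> = B * (t - real n * T)" using n by simp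
  also have "\<dots> \<le> B * T" using n B(2) by (intro mult_left_mono) auto
  also have "integral {0..real n * T} f \<le> - \<eta> * (real n * T)"
    using integral_multiple_windows_le[OF T win] by blast
  also have "- \<eta> * (real n * T) \<le> - \<eta> * (t - T)" using n \<eta> by (intro mult_left_mono_neg) auto
  finally show ?thesis by (simp add: algebra_simps)
qed

lemma bounded_fun_abs: "bounded_fun f \<Longrightarrow> bounded_fun (\<lambda>t. \<bar>f t\<bar>)"
  by (simp add: bounded_fun_def)

lemma bounded_fun_sum:
  assumes "\<And>i. i \<in> I \<Longrightarrow> bounded_fun (f i)"
  shows "bounded_fun (\<lambda>t. \<Sum>i\<in>I. f i t)"
  using assms
proof (induction I rule: infinite_finite_induct)
  case (insert i I)
  obtain B1 B2 where "\<And>t. t \<ge> 0 \<Longrightarrow> \<bar>f i t\<bar> \<le> B1" "\<And>t. t \<ge> 0 \<Longrightarrow> \<bar>\<Sum>i\<in>I. f i t\<bar> \<le> B2"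
    using insert unfolding bounded_fun_def by blast
  then have "\<bar>\<Sum>i\<in>insert i I. f i t\<bar> \<le> B1 + B2" if "t \<ge> 0" for t
    using insert(1,2) that by (simp add: abs_triangle_ineq order_trans[OF abs_triangle_ineq add_mono])
  then show ?case unfolding bounded_fun_def by blast
qed (auto simp: bounded_fun_def)

lemma xi_bounded_above:
  fixes a :: "'n::finite \<Rightarrow> 'n \<Rightarrow> real \<Rightarrow> real"
  assumes two: "\<exists>p q::'n. p \<noteq> q" and bd: "\<And>i j. bounded_fun (a i j)"
  shows "\<exists>B\<ge>0. \<forall>t\<ge>0. xi a r t \<le> B"
proof -
  have "bounded_fun (\<lambda>t. \<Sum>i\<in>UNIV. \<Sum>k\<in>UNIV. \<bar>a i k t\<bar>)"
    by (intro bounded_fun_sum bounded_fun_abs bd)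
  then obtain B where B: "\<And>t. t \<ge> 0 \<Longrightarrow> \<bar>\<Sum>i\<in>UNIV. \<Sum>k\<in>UNIV. \<bar>a i k t\<bar>\<bar> \<le> B"
    unfolding bounded_fun_def by blast
  have "0 \<le> 2 * B" using B[of 0] by simp
  moreover have "xi a r t \<le> 2 * B" if "t \<ge> 0" for t
    using xi_le_sum_abs[OF two, of a r t] B[OF that] by simp
  ultimately show ?thesis by blast
qed

lemma ex_distinct_if_card_ge_2:
  assumes "CARD('a::finite) \<ge> 2"
  shows "\<exists>p q::'a. p \<noteq> q"
proof (rule ccontr)
  assume "\<not> (\<exists>p q::'a. p \<noteq> q)"
  then have "CARD('a) \<le> Suc 0" by (subst card_le_Suc0_iff_eq) auto
  then show False using assms by simp
qed

lemma pd_dist_solutions_exp_decay: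
  fixes \<omega> :: "'n::finite \<Rightarrow> real \<Rightarrow> real" and a :: "'n \<Rightarrow> 'n \<Rightarrow> real \<Rightarrow> real"
  assumes two: "\<exists>p q::'n. p \<noteq> q"
    and a_pc: "\<And>i j. piecewise_continuous (a i j)" and diag: "\<And>i t. a i i t = 0"
    and r: "0 \<le> r" "r < pi / 2" and inv: "Ar_invariant r \<omega> a"
    and T: "T > 0" and \<eta>: "\<eta> \<ge> 0"
    and win: "\<And>t. t \<ge> 0 \<Longrightarrow> xi a r integrable_on {t..t+T} \<and> integral {t..t+T} (xi a r) \<le> - \<eta> * T"
    and B: "\<And>t. t \<ge> 0 \<Longrightarrow> xi a r t \<le> B" "B \<ge> 0"
    and sol: "tvkr_solution \<omega> a \<phi>" "tvkr_solution \<omega> a \<theta>" "in_Ar r (\<phi> 0)" "in_Ar r (\<theta> 0)"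
    and t: "t \<ge> 0"
  shows "pd_dist (\<phi> t) (\<theta> t) \<le> exp ((\<eta> + B) * T) * pd_dist (\<phi> 0) (\<theta> 0) * exp (- \<eta> * t)"
proof -
  have "pd_dist (\<phi> t) (\<theta> t) \<le> pd_dist (\<phi> 0) (\<theta> 0) * exp (integral {0..t} (xi a r))"
    by (rule pd_dist_solutions_le[OF two a_pc diag r inv sol t integrable_on_Icc_if_windows[OF T win t]])
  also have "\<dots> \<le> pd_dist (\<phi> 0) (\<theta> 0) * exp (- \<eta> * t + (\<eta> + B) * T)"
    using integral_le_if_windows[OF T \<eta> win B t] pd_dist_nonneg by (intro mult_left_mono) auto
  also have "\<dots> = exp ((\<eta> + B) * T) * pd_dist (\<phi> 0) (\<theta> 0) * exp (- \<eta> * t)"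
    unfolding mult.assoc mult.left_commute[of "exp _"] mult_exp_exp by (simp add: algebra_simps)
  finally show ?thesis .
qed

theorem theorem2:
  fixes \<omega> :: "'n::finite \<Rightarrow> real \<Rightarrow> real"
    and a :: "'n \<Rightarrow> 'n \<Rightarrow> real \<Rightarrow> real"
    and r :: real
  assumes m2: "CARD('n) \<ge> 2"
    and omega_pc: "\<And>i. piecewise_continuous (\<omega> i)"
    and omega_bd: "\<And>i. bounded_fun (\<omega> i)"
    and a_pc: "\<And>i j. piecewise_continuous (a i j)"
    and a_bd: "\<And>i j. bounded_fun (a i j)"
    and a_diag: "\<And>i t. a i i t = 0"
    and r_range: "0 \<le> r" "r < pi / 2"
    and inv: "Ar_invariant r \<omega> a"
    and avg: "\<exists>T \<eta>. T > 0 \<and> \<eta> > 0 \<and>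
               (\<forall>t\<ge>0. (1 / T) * integral {t..t+T} (\<lambda>s. xi a r s) \<le> - \<eta>)"
  shows "PD_exp_stable r \<omega> a"
proof -
  obtain T \<eta> where T: "T > 0" and \<eta>: "\<eta> > 0"
    and av: "\<And>t. t \<ge> 0 \<Longrightarrow> (1 / T) * integral {t..t+T} (xi a r) \<le> - \<eta>"
    using avg by blast
  have two: "\<exists>p q::'n. p \<noteq> q" by (rule ex_distinct_if_card_ge_2[OF m2])
  note win = window_integral_if_average_le[OF T \<eta> av]
  have "\<exists>B\<ge>0. \<forall>t\<ge>0. xi a r t \<le> B" by (rule xi_bounded_above[OF two a_bd])
  then obtain B where B: "B \<ge> 0" "\<And>t. t \<ge> 0 \<Longrightarrow> xi a r t \<le> B" by auto
  define M where "M = exp ((\<eta> + B) * T)"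
  have "\<bar>(\<phi> t i - \<phi> t j) - (\<theta> t i - \<theta> t j)\<bar>
      \<le> M * Max {\<bar>(\<phi> 0 k - \<phi> 0 l) - (\<theta> 0 k - \<theta> 0 l)\<bar> | k l. True} * exp (- \<eta> * t)"
    if "tvkr_solution \<omega> a \<phi>" "tvkr_solution \<omega> a \<theta>" "in_Ar r (\<phi> 0)" "in_Ar r (\<theta> 0)"
      and "t \<ge> 0" for \<phi> \<theta> t i j
  proof -
    have "\<bar>(\<phi> t i - \<phi> t j) - (\<theta> t i - \<theta> t j)\<bar> \<le> pd_dist (\<phi> t) (\<theta> t)"
      by (rule abs_pd_diff_le_pd_dist)
    also have "\<dots> \<le> M * pd_dist (\<phi> 0) (\<theta> 0) * exp (- \<eta> * t)"
      unfolding M_def using \<eta>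
      by (intro pd_dist_solutions_exp_decay[OF two a_pc a_diag r_range inv T _ win B(2,1) that]) auto
    finally show ?thesis by (simp only: pd_dist_eq_Max_abs)
  qed
  then show ?thesis
    unfolding PD_exp_stable_def by (intro exI[of _ M] exI[of _ 1] exI[of _ \<eta>]) (simp add: M_def \<eta>)
qed

end
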